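(* Let $U$ be a Hilbert space, $T: U\rightrightarrows U$, $(\hat u,\hat w)\in\operatorname{graph}T$, $N,M\in\mathcal{L}(U;U)$ with $M\ge0$, and $\gamma\in[0,1]$. Then $(N,\gamma M)$-subregularity of $T$ at $(\hat u,\hat w)$ implies $(\gamma M,N,M)$-partial subregularity at the same point. If $T^{-1}(\hat w)=\{\hat u\}$ is a singleton, these two properties are equivalent.
   Context: For $T\in\mathcal{L}(U;U)$: $\|x\|^2_T:=\langle Tx,x\rangle$, $\operatorname{dist}^2_T(z,A):=\inf_{u\in A}\|z-u\|^2_T$ ($\inf\emptyset=+\infty$). For $M,P,N\in\mathcal{L}(U;U)$ with $N\ge0$, $M\ge0$, $M\ge P$, $T$ is $(P,N,M)$-partially subregular at $(\hat u,\hat w)$ if there is a neighbourhood $\mathcal{U}\ni\hat u$ with $\operatorname{dist}^2_N(\hat w,T(u)) + \operatorname{dist}^2_{M-P}(u,T^{-1}(\hat w))\ge\operatorname{dist}^2_M(u,T^{-1}(\hat w))$ for all $u\in\mathcal{U}$. $T$ is $(N,M)$-subregular if it is $(M,N,M)$-partially subregular. *)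

theory Defs
  imports "HOL-Analysis.Analysis"
begin

definition normsq_op :: "('a::real_inner \<Rightarrow>\<^sub>L 'a) \<Rightarrow> 'a \<Rightarrow> real" where
  "normsq_op T x = inner (blinfun_apply T x) x"

(* dist^2_T(z,A) := inf_{u in A} \<parallel>z-u\<parallel>^2_T, with inf of the empty set = +\<infinity> (ereal) *)
definition distsq_op :: "('a::real_inner \<Rightarrow>\<^sub>L 'a) \<Rightarrow> 'a \<Rightarrow> 'a set \<Rightarrow> ereal" where
  "distsq_op T z A = (INF u\<in>A. ereal (normsq_op T (z - u)))"

definition op_nonneg :: "('a::real_inner \<Rightarrow>\<^sub>L 'a) \<Rightarrow> bool" where
  "op_nonneg T \<longleftrightarrow> (\<forall>x. 0 \<le> inner (blinfun_apply T x) x)"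

definition op_ge :: "('a::real_inner \<Rightarrow>\<^sub>L 'a) \<Rightarrow> ('a \<Rightarrow>\<^sub>L 'a) \<Rightarrow> bool" where
  "op_ge M P \<longleftrightarrow> op_nonneg (M - P)"

definition setinv :: "('a \<Rightarrow> 'b set) \<Rightarrow> 'b \<Rightarrow> 'a set" where
  "setinv T w = {u. w \<in> T u}"

(* (P,N,M)-partial subregularity at (uh,wh); standing assumptions N \<ge> 0, M \<ge> 0, M \<ge> P
   are part of the definition *)
definition partially_subregular ::
  "('a::real_inner \<Rightarrow>\<^sub>L 'a) \<Rightarrow> ('a \<Rightarrow>\<^sub>L 'a) \<Rightarrow> ('a \<Rightarrow>\<^sub>L 'a) \<Rightarrow> ('a \<Rightarrow> 'a set) \<Rightarrow> 'a \<Rightarrow> 'a \<Rightarrow> bool"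
  where
  "partially_subregular P N M T uh wh \<longleftrightarrow>
     op_nonneg N \<and> op_nonneg M \<and> op_ge M P \<and>
     (\<exists>V. open V \<and> uh \<in> V \<and>
        (\<forall>u\<in>V. distsq_op N wh (T u) + distsq_op (M - P) u (setinv T wh)
                  \<ge> distsq_op M u (setinv T wh)))"

definition subregular ::
  "('a::real_inner \<Rightarrow>\<^sub>L 'a) \<Rightarrow> ('a \<Rightarrow>\<^sub>L 'a) \<Rightarrow> ('a \<Rightarrow> 'a set) \<Rightarrow> 'a \<Rightarrow> 'a \<Rightarrow> bool"
  where
  "subregular N M T uh wh \<longleftrightarrow> partially_subregular M N M T uh wh"

end

theory Submission
  imports Defs
begin

text \<open>For \<open>P = \<gamma> M\<close> every squared distance in the partial subregularity inequality is a
  multiple of \<open>dist\<^sup>2\<^sub>M(u, T\<^sup>-\<^sup>1(\<hat>w))\<close>, which is finite because \<open>\<hat>u \<in> T\<^sup>-\<^sup>1(\<hat>w)\<close>.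
  Subtracting \<open>(1 - \<gamma>) dist\<^sup>2\<^sub>M\<close> from both sides turns the partial subregularity
  inequality into the subregularity inequality for \<open>\<gamma> M\<close>, so the two notions coincide
  whenever \<open>T\<^sup>-\<^sup>1(\<hat>w)\<close> is nonempty; in particular for a singleton.\<close>

lemma normsq_op_scaleR: "normsq_op (c *\<^sub>R M) x = c * normsq_op M x"
  by (simp add: normsq_op_def scaleR_blinfun.rep_eq)

lemma op_nonneg_scaleR:
  assumes "op_nonneg M" "0 \<le> c"
  shows "op_nonneg (c *\<^sub>R M)"
  using assms by (simp add: op_nonneg_def scaleR_blinfun.rep_eq)

lemma op_ge_scaleR:
  assumes "op_nonneg M" "c \<le> 1"
  shows "op_ge M (c *\<^sub>R M)"
proof -
  have "M - c *\<^sub>R M = (1 - c) *\<^sub>R M" by (simp add: algebra_simps)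
  then show ?thesis
    using assms by (simp add: op_ge_def op_nonneg_scaleR)
qed

lemma op_ge_refl: "op_ge M M"
  by (simp add: op_ge_def op_nonneg_def)

lemma distsq_op_zero:
  assumes "S \<noteq> {}"
  shows "distsq_op 0 u S = 0"
  using assms by (simp add: distsq_op_def normsq_op_def zero_ereal_def[symmetric])

lemma distsq_op_scaleR:
  assumes "0 \<le> c" "S \<noteq> {}"
  shows "distsq_op (c *\<^sub>R M) u S = ereal c * distsq_op M u S"
proof (cases "c = 0")
  case True
  then show ?thesis
    using distsq_op_zero[OF assms(2)] by simp
next
  case False
  with assms have "c > 0" by simp
  then have "bij ((*) (ereal c))"
    by (intro bij_betw_byWitness[of _ "\<lambda>x. x / ereal c"])
       (auto simp: ereal_mult_divide ereal_divide_eq)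
  moreover have "mono ((*) (ereal c))"
    using \<open>c > 0\<close> by (simp add: mono_def ereal_mult_left_mono)
  ultimately have "ereal c * (INF s\<in>S. ereal (normsq_op M (u - s)))
      = (INF s\<in>S. ereal c * ereal (normsq_op M (u - s)))"
    by (simp add: mono_bij_Inf image_comp o_def)
  then show ?thesis
    by (simp add: distsq_op_def normsq_op_scaleR)
qed

lemma distsq_op_finite:
  assumes "op_nonneg M" "s \<in> S"
  obtains r where "distsq_op M u S = ereal r" "0 \<le> r"
proof -
  have "0 \<le> distsq_op M u S"
    unfolding distsq_op_def using assms(1)
    by (auto intro!: INF_greatest simp: normsq_op_def op_nonneg_def)
  moreover have "distsq_op M u S \<le> ereal (normsq_op M (u - s))"
    unfolding distsq_op_def using assms(2) by (rule INF_lower)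
  ultimately show ?thesis
    using that by (cases "distsq_op M u S") auto
qed

lemma ereal_scaled_le_iff_add_le:
  fixes d :: ereal
  assumes "0 \<le> r"
  shows "ereal \<gamma> * ereal r \<le> d \<longleftrightarrow> ereal r \<le> d + ereal (1 - \<gamma>) * ereal r"
  by (cases d) (auto simp: algebra_simps)

lemma subregular_scaleR_iff_partially_subregular:
  assumes "setinv T wh \<noteq> {}" "op_nonneg M" "0 \<le> \<gamma>" "\<gamma> \<le> 1"
  shows "subregular N (\<gamma> *\<^sub>R M) T uh wh \<longleftrightarrow> partially_subregular (\<gamma> *\<^sub>R M) N M T uh wh"
proof -
  define S where "S = setinv T wh"
  have "M - \<gamma> *\<^sub>R M = (1 - \<gamma>) *\<^sub>R M" by (simp add: algebra_simps)
  then have dist_diff: "distsq_op (M - \<gamma> *\<^sub>R M) u S = ereal (1 - \<gamma>) * distsq_op M u S" for u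
    using distsq_op_scaleR[of "1 - \<gamma>" S M u] assms(1,4) S_def by simp
  have dist_scaled: "distsq_op (\<gamma> *\<^sub>R M) u S = ereal \<gamma> * distsq_op M u S" for u
    using distsq_op_scaleR assms(1,3) S_def by simp
  have inequality_iff:
    "distsq_op (\<gamma> *\<^sub>R M) u S \<le> distsq_op N wh (T u)
     \<longleftrightarrow> distsq_op M u S \<le> distsq_op N wh (T u) + distsq_op (M - \<gamma> *\<^sub>R M) u S" for u
  proof -
    obtain s where "s \<in> S" using assms(1) S_def by blast
    then obtain r where "distsq_op M u S = ereal r" "0 \<le> r"
      using distsq_op_finite[OF assms(2)] by blast
    then show ?thesis
      unfolding dist_scaled dist_diff by (simp only: ereal_scaled_le_iff_add_le)
  qed
  have "distsq_op (\<gamma> *\<^sub>R M - \<gamma> *\<^sub>R M) u S = 0" for u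
    using distsq_op_zero assms(1) S_def by simp
  then show ?thesis
    unfolding subregular_def partially_subregular_def S_def[symmetric]
    using assms(2) inequality_iff op_nonneg_scaleR[OF assms(2,3)] op_ge_scaleR[OF assms(2,4)]
      op_ge_refl[of "\<gamma> *\<^sub>R M"]
    by simp
qed

theorem corollary4p6:
  fixes T :: "'a::{real_inner,complete_space} \<Rightarrow> 'a set"
    and N M :: "'a \<Rightarrow>\<^sub>L 'a"
    and uh wh :: 'a
    and \<gamma> :: real
  assumes "wh \<in> T uh"
    and "op_nonneg M"
    and "0 \<le> \<gamma>" and "\<gamma> \<le> 1"
  shows "(subregular N (\<gamma> *\<^sub>R M) T uh wh \<longrightarrow> partially_subregular (\<gamma> *\<^sub>R M) N M T uh wh)
    \<and> (setinv T wh = {uh} \<longrightarrow>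
         (subregular N (\<gamma> *\<^sub>R M) T uh wh \<longleftrightarrow> partially_subregular (\<gamma> *\<^sub>R M) N M T uh wh))"
proof -
  have "setinv T wh \<noteq> {}"
    using assms(1) by (auto simp: setinv_def)
  then show ?thesis
    using subregular_scaleR_iff_partially_subregular assms(2-4) by blast
qed

end
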